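(* Let $n\geq 2$ and let $X\subsetneq Z\subseteq[n]$ with $|Z|\geq |X|+2$. If $W\subseteq[n]$ satisfies $W\notin \mathcal{B}_{[\emptyset,X]}\cup\mathcal{B}_{[Z,[n]]}$, then there exists $W_0$ with $X\subsetneq W_0\subsetneq Z$ and $|W_0|=|X|+1$ such that $W_0$ and $W$ are incomparable.
   Context: $\mathcal{B}_{[X,Y]}=\{U: X\subseteq U\subseteq Y\}$ for subsets $X\subseteq Y$ of $[n]$. *)

theory Defs
  imports Main
begin

definition Bint :: "nat set \<Rightarrow> nat set \<Rightarrow> nat set set" where
  "Bint X Y = {U. X \<subseteq> U \<and> U \<subseteq> Y}"

end

theory Submission
  imports Defs
begin

text \<open>Pick \<open>w \<in> W - X\<close> and extend \<open>X\<close> by one point \<open>a \<in> Z - X\<close> other than \<open>w\<close>,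
  so that \<open>w\<close> witnesses \<open>\<not> W \<subseteq> insert a X\<close>. If \<open>X \<subseteq> W\<close>, take \<open>a \<in> Z - W\<close> (which
  exists since \<open>\<not> Z \<subseteq> W\<close>); then \<open>a\<close> witnesses \<open>\<not> insert a X \<subseteq> W\<close>. Otherwise a point
  of \<open>X - W\<close> does, and \<open>|Z - X| \<ge> 2\<close> leaves room for \<open>a\<close> to avoid \<open>w\<close>.\<close>

lemma obtain_incomparable_insert:
  assumes "2 \<le> card (Z - X)" and "\<not> W \<subseteq> X" and "\<not> Z \<subseteq> W"
  obtains a where "a \<in> Z - X" and "\<not> insert a X \<subseteq> W" and "\<not> W \<subseteq> insert a X"
proof -
  obtain w where w: "w \<in> W" "w \<notin> X"
    using assms(2) by blast
  show thesis
  proof (cases "X \<subseteq> W")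
    case True
    obtain z where "z \<in> Z" "z \<notin> W"
      using assms(3) by blast
    with True w show thesis
      by (intro that[of z]) auto
  next
    case False
    have "\<not> Z - X \<subseteq> {w}"
    proof
      assume "Z - X \<subseteq> {w}"
      then have "card (Z - X) \<le> 1"
        using card_mono[of "{w}" "Z - X"] by simp
      with assms(1) show False
        by simp
    qed
    then obtain b where "b \<in> Z - X" "b \<noteq> w"
      by blast
    with False w show thesis
      by (intro that[of b]) auto
  qed
qed

theorem lemma2p4:
  fixes n :: nat and X Z W :: "nat set"
  assumes "n \<ge> 2"
    and "X \<subset> Z" and "Z \<subseteq> {1..n}"
    and "card Z \<ge> card X + 2"
    and "W \<subseteq> {1..n}"
    and "W \<notin> Bint {} X \<union> Bint Z {1..n}"
  shows "\<exists>W0. X \<subset> W0 \<and> W0 \<subset> Z \<and> card W0 = card X + 1 \<and>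
               \<not> W0 \<subseteq> W \<and> \<not> W \<subseteq> W0"
proof -
  have "finite Z"
    using assms(3) finite_subset by blast
  then have "finite X"
    using assms(2) finite_subset by blast
  have "card (Z - X) = card Z - card X"
    using assms(2) \<open>finite X\<close> by (intro card_Diff_subset) auto
  then have "2 \<le> card (Z - X)"
    using assms(4) by linarith
  moreover have "\<not> W \<subseteq> X" and "\<not> Z \<subseteq> W"
    using assms(5,6) by (auto simp: Bint_def)
  ultimately obtain a where a: "a \<in> Z - X" "\<not> insert a X \<subseteq> W" "\<not> W \<subseteq> insert a X"
    by (rule obtain_incomparable_insert)
  have card_insert: "card (insert a X) = card X + 1"
    using a(1) \<open>finite X\<close> by simp
  have "insert a X \<subset> Z"
    using a(1) assms(2,4) card_insert by auto
  with a card_insert show ?thesis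
    by blast
qed

end
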